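(* Let $u=0$ and $\theta\in(1/2,1]$, and let $m\in\mathbb N$ be arbitrary. Then the region of unconditional stability satisfies $$D=D_{-\infty}=\{\mu\in\mathbb C:\ |\mu|<1\}.$$ In particular $D(0,1)\subseteq D_y$ for every $y<0$.
   Context: Fix $\theta\in[0,1]$, $u\in[0,1)$, $m\in\mathbb N$, and define the polynomials $a(z)=z^{m+1}-z^m$, $b(z)=\theta(uz^2+(1-u)z)+(1-\theta)(uz+(1-u))$, $c(z)=\theta z^{m+1}+(1-\theta)z^m$. For $y<0$ and $\mu\in\mathbb C$, the equation $a(\xi)=y\,c(\xi)-y\mu\,b(\xi)$ in the unknown $\xi\in\mathbb C$ is called stable if all its roots satisfy $|\xi|<1$. For $y=-\infty$ it is called stable if all roots of $c(\xi)-\mu\,b(\xi)=0$ satisfy $|\xi|<1$. For $y\in(-\infty,0)\cup\{-\infty\}$ let $D_y=\{\mu\in\mathbb C:$ the equation is stable for $y\}$, and let $D=\bigcap_{y\in(-\infty,0)\cup\{-\infty\}}D_y$ (region of unconditional stability). $D(0,1)$ denotes the open unit disk. *)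

theory Defs
  imports "HOL-Analysis.Analysis"
begin

definition pa :: "nat \<Rightarrow> complex \<Rightarrow> complex" where
  "pa m z = z ^ (m + 1) - z ^ m"

definition pb :: "real \<Rightarrow> real \<Rightarrow> complex \<Rightarrow> complex" where
  "pb \<theta> u z = of_real \<theta> * (of_real u * z ^ 2 + of_real (1 - u) * z)
               + of_real (1 - \<theta>) * (of_real u * z + of_real (1 - u))"

definition pc :: "real \<Rightarrow> nat \<Rightarrow> complex \<Rightarrow> complex" where
  "pc \<theta> m z = of_real \<theta> * z ^ (m + 1) + of_real (1 - \<theta>) * z ^ m"

definition stable_fin :: "real \<Rightarrow> real \<Rightarrow> nat \<Rightarrow> real \<Rightarrow> complex \<Rightarrow> bool" where
  "stable_fin \<theta> u m y \<mu> \<longleftrightarrow>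
     (\<forall>\<xi>. pa m \<xi> = of_real y * pc \<theta> m \<xi> - of_real y * \<mu> * pb \<theta> u \<xi> \<longrightarrow> norm \<xi> < 1)"

definition stable_inf :: "real \<Rightarrow> real \<Rightarrow> nat \<Rightarrow> complex \<Rightarrow> bool" where
  "stable_inf \<theta> u m \<mu> \<longleftrightarrow>
     (\<forall>\<xi>. pc \<theta> m \<xi> - \<mu> * pb \<theta> u \<xi> = 0 \<longrightarrow> norm \<xi> < 1)"

definition D_fin :: "real \<Rightarrow> real \<Rightarrow> nat \<Rightarrow> real \<Rightarrow> complex set" where
  "D_fin \<theta> u m y = {\<mu>. stable_fin \<theta> u m y \<mu>}"

definition D_inf :: "real \<Rightarrow> real \<Rightarrow> nat \<Rightarrow> complex set" where
  "D_inf \<theta> u m = {\<mu>. stable_inf \<theta> u m \<mu>}"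

definition D_unc :: "real \<Rightarrow> real \<Rightarrow> nat \<Rightarrow> complex set" where
  "D_unc \<theta> u m = D_inf \<theta> u m \<inter> (\<Inter>y\<in>{y::real. y < 0}. D_fin \<theta> u m y)"

end

theory Submission
  imports Defs "HOL-Computational_Algebra.Fundamental_Theorem_Algebra"
begin

text \<open>For u = 0 we have b(z) = \<theta> z + (1 - \<theta>) and c(z) = z^m b(z), whose only root outside the
  factor z^m lies in the unit disk when \<theta> > 1/2. Hence c - \<mu> b = b (z^m - \<mu>) is stable exactly
  for |\<mu>| < 1. For finite y < 0 the equation reads z^m (z - 1) = y b(z) (z^m - \<mu>); at a root with
  |z| \<ge> 1 one gets (z - 1) conj b(z) = y |b(z)|^2 (1 - \<mu>/z^m), whose left side has nonnegative
  and whose right side has negative real part.\<close>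

lemma pb_u_zero: "pb \<theta> 0 z = of_real \<theta> * z + of_real (1 - \<theta>)"
  by (simp add: pb_def)

lemma pc_eq_power_mult_pb_u_zero: "pc \<theta> m z = z ^ m * pb \<theta> 0 z"
  by (simp add: pc_def pb_u_zero algebra_simps)

lemma norm_root_pb_u_zero_less_one:
  assumes "1/2 < \<theta>" and "pb \<theta> 0 \<xi> = 0"
  shows "norm \<xi> < 1"
proof -
  have "\<xi> = - of_real ((1 - \<theta>) / \<theta>)"
    using assms by (simp add: pb_u_zero field_simps add_eq_0_iff2)
  then have "norm \<xi> = \<bar>(1 - \<theta>) / \<theta>\<bar>"
    by (simp only: norm_minus_cancel norm_of_real)
  also have "\<dots> < 1"
    using assms(1) by (simp add: abs_if field_simps)
  finally show ?thesis .
qed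

lemma Re_mult_cnj_pb_u_zero_nonneg:
  assumes "1/2 \<le> \<theta>" and "1 \<le> norm \<xi>"
  shows "0 \<le> Re ((\<xi> - 1) * cnj (pb \<theta> 0 \<xi>))"
proof -
  have "Re ((\<xi> - 1) * cnj (pb \<theta> 0 \<xi>)) = \<theta> * (norm \<xi>)\<^sup>2 + (1 - 2*\<theta>) * Re \<xi> - (1 - \<theta>)"
    unfolding cmod_power2 by (simp add: pb_u_zero algebra_simps power2_eq_square)
  also have "\<dots> \<ge> \<theta> * (norm \<xi>)\<^sup>2 + (1 - 2*\<theta>) * norm \<xi> - (1 - \<theta>)"
    using assms(1) complex_Re_le_cmod[of \<xi>] by (simp add: mult_left_mono_neg)
  also have "\<theta> * (norm \<xi>)\<^sup>2 + (1 - 2*\<theta>) * norm \<xi> - (1 - \<theta>)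
      = (norm \<xi> - 1) * (\<theta> * (norm \<xi> - 1) + 1)"
    by (simp add: algebra_simps power2_eq_square)
  also have "\<dots> \<ge> 0"
    using assms by (simp add: mult_nonneg_nonneg)
  finally show ?thesis .
qed

lemma Re_one_minus_pos:
  fixes w :: complex
  assumes "norm w < 1"
  shows "0 < Re (1 - w)"
  using complex_Re_le_cmod[of w] assms by simp

lemma stable_fin_u_zero:
  assumes "1/2 < \<theta>" and "y < 0" and "norm \<mu> < 1"
  shows "stable_fin \<theta> 0 m y \<mu>"
  unfolding stable_fin_def
proof (intro allI impI)
  fix \<xi> :: complex
  assume root: "pa m \<xi> = of_real y * pc \<theta> m \<xi> - of_real y * \<mu> * pb \<theta> 0 \<xi>"
  show "norm \<xi> < 1"
  proof (rule ccontr)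
    assume "\<not> norm \<xi> < 1"
    then have outside: "1 \<le> norm \<xi>" by simp
    define L where "L = pb \<theta> 0 \<xi>"
    define p where "p = \<xi> ^ m"
    have "L \<noteq> 0"
      using norm_root_pb_u_zero_less_one[OF assms(1), of \<xi>] outside by (auto simp: L_def)
    have "1 \<le> norm p"
      using outside by (simp add: p_def norm_power one_le_power)
    then have "p \<noteq> 0" by auto
    have "p * (\<xi> - 1) = of_real y * L * (p - \<mu>)"
      using root by (simp add: pa_def pc_eq_power_mult_pb_u_zero L_def p_def algebra_simps)
    then have "\<xi> - 1 = of_real y * L * (1 - \<mu> / p)"
      using \<open>p \<noteq> 0\<close> by (simp add: field_simps)
    then have "(\<xi> - 1) * cnj L = of_real y * (L * cnj L) * (1 - \<mu> / p)"
      by (simp only: mult_ac)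
    also have "L * cnj L = of_real ((norm L)\<^sup>2)"
      by (rule complex_norm_square[symmetric])
    finally have "(\<xi> - 1) * cnj L = of_real (y * (norm L)\<^sup>2) * (1 - \<mu> / p)"
      by simp
    moreover have "norm (\<mu> / p) < 1"
      using assms(3) \<open>1 \<le> norm p\<close> by (simp add: norm_divide divide_less_eq)
    then have "y * (norm L)\<^sup>2 * Re (1 - \<mu> / p) < 0"
      using assms(2) \<open>L \<noteq> 0\<close> Re_one_minus_pos by (simp add: mult_neg_pos)
    ultimately have "Re ((\<xi> - 1) * cnj L) < 0" by simp
    then show False
      using Re_mult_cnj_pb_u_zero_nonneg[of \<theta> \<xi>] assms(1) outside by (simp add: L_def)
  qed
qed

lemma stable_inf_u_zero_iff:
  assumes "1/2 < \<theta>" and "m \<ge> 1"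
  shows "stable_inf \<theta> 0 m \<mu> \<longleftrightarrow> norm \<mu> < 1"
proof -
  have factor: "pc \<theta> m \<xi> - \<mu> * pb \<theta> 0 \<xi> = pb \<theta> 0 \<xi> * (\<xi> ^ m - \<mu>)" for \<xi>
    by (simp add: pc_eq_power_mult_pb_u_zero algebra_simps)
  have norm_less_one_iff: "norm (\<xi> ^ m) < 1 \<longleftrightarrow> norm \<xi> < 1" for \<xi> :: complex
    using assms(2) by (simp add: norm_power power_less_one_iff)
  show ?thesis
  proof
    assume "stable_inf \<theta> 0 m \<mu>"
    obtain \<xi> where "\<xi> ^ m = \<mu>"
      using nth_root_exists[of m \<mu>] assms(2) by auto
    then show "norm \<mu> < 1"
      using \<open>stable_inf \<theta> 0 m \<mu>\<close> factor[of \<xi>] norm_less_one_iff[of \<xi>]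
      by (simp add: stable_inf_def)
  next
    assume "norm \<mu> < 1"
    then show "stable_inf \<theta> 0 m \<mu>"
      using norm_root_pb_u_zero_less_one[OF assms(1)] norm_less_one_iff
      by (auto simp: stable_inf_def factor)
  qed
qed

theorem mainTheorem2:
  fixes \<theta> :: real and m :: nat
  assumes "1/2 < \<theta>" and "\<theta> \<le> 1" and "m \<ge> 1"
  shows "D_unc \<theta> 0 m = D_inf \<theta> 0 m \<and> D_inf \<theta> 0 m = ball 0 1
         \<and> (\<forall>y::real. y < 0 \<longrightarrow> ball 0 1 \<subseteq> D_fin \<theta> 0 m y)"
proof -
  have fin: "\<forall>y::real. y < 0 \<longrightarrow> ball 0 1 \<subseteq> D_fin \<theta> 0 m y"
    using stable_fin_u_zero[OF assms(1)] by (auto simp: D_fin_def)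
  have inf: "D_inf \<theta> 0 m = ball 0 1"
    using stable_inf_u_zero_iff[OF assms(1,3)] by (auto simp: D_inf_def)
  have "D_unc \<theta> 0 m = D_inf \<theta> 0 m"
    using fin inf by (auto simp: D_unc_def)
  with fin inf show ?thesis by blast
qed

end
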